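(* Let $\nu>0$ and \[W_2(x)=(1-x^2)^{\nu-1/2}\begin{pmatrix}2(\nu+1)x^2+2\nu&(2\nu+1)\sqrt2\,x\\(2\nu+1)\sqrt2\,x&\nu x^2+\nu+1\end{pmatrix},\qquad x\in(-1,1).\] Let $B_n,C_n$ be the $2\times2$ recurrence coefficients of the monic matrix orthogonal polynomials $P_n$ for $W_2$, i.e. $xP_n(x)=P_{n+1}(x)+B_nP_n(x)+C_nP_{n-1}(x)$ with $P_{-1}=0$, $P_0=I_2$. Then as $n\to\infty$, \[B_n=\frac1{n^2}\begin{pmatrix}0&\sqrt2(1+\nu)\\ \frac{\nu}{\sqrt2}&0\end{pmatrix}+O(n^{-3}),\qquad C_n=\frac14I_2+O(n^{-2}).\]
   Context: The monic matrix orthogonal polynomial $P_n$ of degree $n$ for $W_2$ is the unique $2\times2$ matrix polynomial $P_n(x)=x^nI_2+\dots$ with $\int_{-1}^1P_n(x)W_2(x)P_m(x)^\ast dx=0$ for $m\ne n$. *)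

theory Defs
  imports "HOL-Analysis.Analysis"
begin

text \<open>2x2 real matrices are rendered as real^2^2; entry (i,j) is A $ i $ j (row i).\<close>

definition mat2 :: "real \<Rightarrow> real \<Rightarrow> real \<Rightarrow> real \<Rightarrow> real^2^2" where
  "mat2 a b c d = vector [vector [a, b], vector [c, d]]"

text \<open>The weight W_2 on (-1,1) (its value at the endpoints is irrelevant).\<close>
definition W2 :: "real \<Rightarrow> real \<Rightarrow> real^2^2" where
  "W2 \<nu> x = ((1 - x\<^sup>2) powr (\<nu> - 1/2)) *\<^sub>R
     mat2 (2*(\<nu>+1)*x\<^sup>2 + 2*\<nu>) ((2*\<nu>+1) * sqrt 2 * x)
          ((2*\<nu>+1) * sqrt 2 * x) (\<nu> * x\<^sup>2 + \<nu> + 1)"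

definition monic_matpoly :: "nat \<Rightarrow> (real \<Rightarrow> real^2^2) \<Rightarrow> bool" where
  "monic_matpoly n p \<longleftrightarrow>
     (\<exists>A :: nat \<Rightarrow> real^2^2. \<forall>x. p x = x ^ n *\<^sub>R mat 1 + (\<Sum>k<n. x ^ k *\<^sub>R A k))"

text \<open>P is the sequence of monic matrix orthogonal polynomials for the weight W
  (the adjoint of a real matrix is its transpose).\<close>
definition monic_MOPS :: "(real \<Rightarrow> real^2^2) \<Rightarrow> (nat \<Rightarrow> real \<Rightarrow> real^2^2) \<Rightarrow> bool" where
  "monic_MOPS W P \<longleftrightarrow>
     (\<forall>n. monic_matpoly n (P n)) \<and>
     (\<forall>n m. n \<noteq> m \<longrightarrow>
        ((\<lambda>x. P n x ** W x ** transpose (P m x)) has_integral 0) {-1..1})"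

end

theory Submission
  imports Defs
begin

text \<open>The weight \<open>W2\<close> admits a second-order matrix differential operator \<open>D\<close>, acting on matrix
  polynomials from the right, that is symmetric with respect to \<open>W2\<close> and maps \<open>x^n\<close> to
  \<open>x^n \<Lambda>\<^sub>n\<close> plus lower order terms. For the monic orthogonal polynomial \<open>P\<^sub>n\<close>, the defect
  \<open>D(P\<^sub>n) - \<Lambda>\<^sub>n P\<^sub>n\<close> has degree \<open>< n\<close> and is orthogonal to every polynomial of degree \<open>< n\<close>,
  so it vanishes because \<open>W2\<close> is positive definite. Comparing the coefficients of \<open>x^(n-1)\<close> and
  \<open>x^(n-2)\<close> in \<open>D(P\<^sub>n) = \<Lambda>\<^sub>n P\<^sub>n\<close> gives these coefficients of \<open>P\<^sub>n\<close> as explicit rational functions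
  of \<open>n\<close>. Comparing coefficients in the three-term recurrence expresses \<open>B\<^sub>n\<close> and \<open>C\<^sub>n\<close> through
  them, and the asymptotics follow from the explicit formulas.\<close>

section \<open>Moments of the Gegenbauer weight\<close>

definition gegenbauer_weight :: "real \<Rightarrow> real \<Rightarrow> real" where
  "gegenbauer_weight \<nu> x = (1 - x\<^sup>2) powr (\<nu> - 1/2)"

lemma gegenbauer_weight_nonneg: "gegenbauer_weight \<nu> x \<ge> 0"
  by (simp add: gegenbauer_weight_def)

lemma gegenbauer_weight_pos: "\<bar>x\<bar> < 1 \<Longrightarrow> gegenbauer_weight \<nu> x > 0"
  by (simp add: gegenbauer_weight_def flip: abs_square_less_1)

lemma gegenbauer_weight_minus [simp]: "gegenbauer_weight \<nu> (- x) = gegenbauer_weight \<nu> x"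
  by (simp add: gegenbauer_weight_def)

text \<open>The substitution \<open>x = 2t - 1\<close> turns the weight into a Beta integrand.\<close>
lemma integrable_gegenbauer_weight:
  assumes "\<nu> > -1/2"
  shows "gegenbauer_weight \<nu> integrable_on {-1..1}"
proof -
  define a where "a = \<nu> + 1/2"
  have "(\<lambda>t. t powr (a - 1) * (1 - t) powr (a - 1)) integrable_on {0..1}"
    by (rule integrable_Beta') (use assms in \<open>auto simp: a_def\<close>)
  from integrable_on_cmult_left[OF this, of "4 powr (a - 1)"]
  have "(\<lambda>t. 4 powr (a - 1) * (t powr (a - 1) * (1 - t) powr (a - 1))) integrable_on {0..1}"
    by simp
  moreover have "gegenbauer_weight \<nu> (2*t - 1) = 4 powr (a - 1) * (t powr (a - 1) * (1 - t) powr (a - 1))"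
    if "t \<in> {0..1}" for t
  proof -
    have "1 - (2*t - 1)\<^sup>2 = 4 * (t * (1 - t))"
      by (simp add: power2_eq_square algebra_simps)
    then show ?thesis
      using that by (simp add: gegenbauer_weight_def a_def powr_mult)
  qed
  ultimately have "(\<lambda>t. gegenbauer_weight \<nu> (2*t - 1)) integrable_on {0..1}"
    by (metis (no_types, lifting) integrable_eq)
  then have "(\<lambda>x. gegenbauer_weight \<nu> (2 * ((1/2) *\<^sub>R x + 1/2) - 1)) integrable_on
      ((\<lambda>x. (1 / (1/2)) *\<^sub>R x + -((1/(1/2)) *\<^sub>R (1/2))) ` cbox 0 1)"
    by (intro integrable_affinity) auto
  moreover have "(\<lambda>x. (1 / (1/2)) *\<^sub>R x + -((1/(1/2)) *\<^sub>R (1/2::real))) ` cbox 0 1 = {-1..1}"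
    by (auto simp: image_iff intro!: bexI[where x="(_ + 1) / 2"]; simp add: field_simps)
  ultimately show ?thesis
    by simp
qed

lemma integrable_gegenbauer_monomial:
  assumes "\<nu> > -1/2"
  shows "(\<lambda>x. x^k * gegenbauer_weight \<nu> x) integrable_on {-1..1}"
proof (rule measurable_bounded_by_integrable_imp_integrable_real[OF _ integrable_gegenbauer_weight[OF assms]])
  show "(\<lambda>x. x^k * gegenbauer_weight \<nu> x) \<in> borel_measurable (lebesgue_on {-1..1})"
    by (rule measurable_restrict_space1, rule measurable_completion)
      (simp add: gegenbauer_weight_def)
  show "\<bar>x^k * gegenbauer_weight \<nu> x\<bar> \<le> gegenbauer_weight \<nu> x" if "x \<in> {-1..1}" for x
  proof -
    have "\<bar>x\<bar>^k \<le> 1"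
      using that by (intro power_le_one) auto
    then show ?thesis
      using mult_right_mono[of "\<bar>x\<bar>^k" 1 "gegenbauer_weight \<nu> x"]
      by (simp add: abs_mult power_abs gegenbauer_weight_nonneg)
  qed
qed auto

definition gegenbauer_moment :: "real \<Rightarrow> nat \<Rightarrow> real" where
  "gegenbauer_moment \<nu> k = integral {-1..1} (\<lambda>x. x^k * gegenbauer_weight \<nu> x)"

lemma gegenbauer_moment:
  assumes "\<nu> > -1/2"
  shows "((\<lambda>x. x^k * gegenbauer_weight \<nu> x) has_integral gegenbauer_moment \<nu> k) {-1..1}"
  unfolding gegenbauer_moment_def
  using integrable_gegenbauer_monomial[OF assms] by (rule integrable_integral)

lemma gegenbauer_moment_odd:
  assumes "\<nu> > -1/2"
  shows "gegenbauer_moment \<nu> (Suc (2*k)) = 0"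
proof -
  let ?f = "\<lambda>x. x ^ Suc (2*k) * gegenbauer_weight \<nu> x"
  have "((\<lambda>x. ?f (-x)) has_integral gegenbauer_moment \<nu> (Suc (2*k))) {-1..1}"
    using has_integral_reflect_lemma_real[OF gegenbauer_moment[OF assms, of "Suc (2*k)"]] by simp
  moreover have "?f (-x) = - ?f x" for x
    by simp
  ultimately have "((\<lambda>x. - ?f x) has_integral gegenbauer_moment \<nu> (Suc (2*k))) {-1..1}"
    by simp
  from has_integral_unique[OF this has_integral_neg[OF gegenbauer_moment[OF assms]]]
  show ?thesis
    by simp
qed

lemma powr_gegenbauer_succ:
  assumes "\<bar>x\<bar> < 1"
  shows "(1 - x\<^sup>2) powr (\<nu> + 1/2) = (1 - x\<^sup>2) * gegenbauer_weight \<nu> x"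
proof -
  have "\<nu> + 1/2 = 1 + (\<nu> - 1/2)"
    by simp
  then have "(1 - x\<^sup>2) powr (\<nu> + 1/2) = (1 - x\<^sup>2) powr 1 * gegenbauer_weight \<nu> x"
    unfolding gegenbauer_weight_def by (simp only: powr_add)
  moreover have "1 - x\<^sup>2 > 0"
    using assms by (simp add: abs_square_less_1)
  ultimately show ?thesis
    by simp
qed

lemma has_real_derivative_gegenbauer_succ:
  assumes "\<bar>x\<bar> < 1"
  shows "((\<lambda>x. x^(k+1) * (1 - x\<^sup>2) powr (\<nu> + 1/2)) has_real_derivative
      real (k+1) * (x^k * gegenbauer_weight \<nu> x) - (real k + 2*\<nu> + 2) * (x^(k+2) * gegenbauer_weight \<nu> x))
    (at x)"
proof -
  have pos: "1 - x\<^sup>2 > 0"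
    using assms by (simp add: abs_square_less_1)
  have "((\<lambda>x. x^(k+1) * (1 - x\<^sup>2) powr (\<nu> + 1/2)) has_real_derivative
      real (k+1) * x^k * (1 - x\<^sup>2) powr (\<nu> + 1/2)
      + x^(k+1) * ((\<nu> + 1/2) * (1 - x\<^sup>2) powr (\<nu> + 1/2 - 1) * (- (2 * x)))) (at x)"
    using pos by (auto intro!: derivative_eq_intros simp: power2_eq_square) (cases k, auto simp: algebra_simps)
  moreover have "real (k+1) * x^k * (1 - x\<^sup>2) powr (\<nu> + 1/2)
      + x^(k+1) * ((\<nu> + 1/2) * (1 - x\<^sup>2) powr (\<nu> + 1/2 - 1) * (- (2 * x)))
    = real (k+1) * (x^k * gegenbauer_weight \<nu> x) - (real k + 2*\<nu> + 2) * (x^(k+2) * gegenbauer_weight \<nu> x)"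
    unfolding powr_gegenbauer_succ[OF assms]
    by (simp add: gegenbauer_weight_def algebra_simps power2_eq_square)
  ultimately show ?thesis
    by simp
qed

text \<open>Integrate the derivative of \<open>x^(k+1) (1 - x\<^sup>2) powr (\<nu> + 1/2)\<close>, a function vanishing at \<open>\<plusminus>1\<close>.\<close>
lemma gegenbauer_moment_rec:
  assumes "\<nu> > -1/2"
  shows "real (k+1) * gegenbauer_moment \<nu> k = (real k + 2*\<nu> + 2) * gegenbauer_moment \<nu> (k+2)"
proof -
  define g where "g x = x^(k+1) * (1 - x\<^sup>2) powr (\<nu> + 1/2)" for x
  define g' where "g' x = real (k+1) * (x^k * gegenbauer_weight \<nu> x)
      - (real k + 2*\<nu> + 2) * (x^(k+2) * gegenbauer_weight \<nu> x)" for x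
  have "(g' has_integral (g 1 - g (-1))) {-1..1}"
  proof (rule fundamental_theorem_of_calculus_interior)
    show "continuous_on {-1..1} g"
      unfolding g_def using assms
      by (intro continuous_intros continuous_on_powr') (auto simp: abs_square_le_1 abs_le_iff)
    show "(g has_vector_derivative g' x) (at x)" if "x \<in> {-1<..<1}" for x
      using has_real_derivative_gegenbauer_succ[of x k \<nu>] that
      unfolding g_def g'_def has_real_derivative_iff_has_vector_derivative by auto
  qed simp
  moreover have "g 1 = 0" "g (-1) = 0"
    by (simp_all add: g_def)
  moreover have "(g' has_integral (real (k+1) * gegenbauer_moment \<nu> k
      - (real k + 2*\<nu> + 2) * gegenbauer_moment \<nu> (k+2))) {-1..1}"
    unfolding g'_def by (intro has_integral_diff has_integral_mult_right gegenbauer_moment assms)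
  ultimately show ?thesis
    by (auto dest: has_integral_unique)
qed

section \<open>\<open>2 \<times> 2\<close> matrices and matrix polynomials\<close>

lemma mat2_nth [simp]:
  "mat2 a b c d $ 1 $ 1 = a" "mat2 a b c d $ 1 $ 2 = b"
  "mat2 a b c d $ 2 $ 1 = c" "mat2 a b c d $ 2 $ 2 = d"
  by (simp_all add: mat2_def)

lemma matrix2_eq_iff:
  "(A::real^2^2) = B \<longleftrightarrow> A$1$1 = B$1$1 \<and> A$1$2 = B$1$2 \<and> A$2$1 = B$2$1 \<and> A$2$2 = B$2$2"
  by (auto simp: vec_eq_iff forall_2)

lemma matrix2_mult_nth [simp]: "((A::real^2^2) ** B) $ i $ j = A$i$1 * B$1$j + A$i$2 * B$2$j"
  by (simp add: matrix_matrix_mult_def sum_2)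

lemma mat1_2_nth [simp]:
  "(mat 1 :: real^2^2) $ 1 $ 1 = 1" "(mat 1 :: real^2^2) $ 2 $ 2 = 1"
  "(mat 1 :: real^2^2) $ 1 $ 2 = 0" "(mat 1 :: real^2^2) $ 2 $ 1 = 0"
  by (simp_all add: mat_def)

lemma sqrt_2_mult_sqrt_2 [simp]: "sqrt 2 * (sqrt 2 * y) = 2 * y"
  by (simp flip: mult.assoc)

lemma transpose_nth [simp]: "transpose A $ i $ j = A $ j $ i"
  by (simp add: transpose_def)

lemma matrix_scaleR_left: "((c::real) *\<^sub>R A) ** (B::real^'n^'m) = c *\<^sub>R (A ** B)"
  by (simp add: scalar_matrix_assoc)

lemma matrix_scaleR_right: "(A::real^'n^'m) ** ((c::real) *\<^sub>R B) = c *\<^sub>R (A ** B)"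
  by (simp add: matrix_scalar_ac scalar_matrix_assoc)

lemma matrix_add_rdistrib: "((A::real^'n^'m) + B) ** C = A ** C + B ** C"
  by (simp add: matrix_matrix_mult_def vec_eq_iff sum.distrib algebra_simps)

lemma matrix_diff_rdistrib: "((A::real^'n^'m) - B) ** C = A ** C - B ** C"
  by (simp add: matrix_matrix_mult_def vec_eq_iff sum_subtractf algebra_simps)

lemma matrix_mult_sum_left: "(\<Sum>i\<in>S. f i) ** (B::real^'n^'m) = (\<Sum>i\<in>S. f i ** B)"
  by (induction S rule: infinite_finite_induct) (auto simp: matrix_add_rdistrib)

lemma matrix_mult_sum_right: "(B::real^'n^'m) ** (\<Sum>i\<in>S. f i) = (\<Sum>i\<in>S. B ** f i)"
  by (induction S rule: infinite_finite_induct) (auto simp: matrix_add_ldistrib)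

lemma transpose_zero [simp]: "transpose (0::real^'n^'m) = 0"
  by (simp add: transpose_def vec_eq_iff)

lemma transpose_add: "transpose ((A::real^'n^'m) + B) = transpose A + transpose B"
  by (simp add: transpose_def vec_eq_iff)

lemma transpose_sum: "transpose (\<Sum>i\<in>S. f i) = (\<Sum>i\<in>S. transpose (f i :: real^'n^'m))"
  by (induction S rule: infinite_finite_induct) (auto simp: transpose_add vec_eq_iff)

lemma bounded_linear_matrix_sandwich:
  "bounded_linear (\<lambda>X. (A::real^'n^'m) ** (X::real^'k^'n) ** (B::real^'l^'k))"
proof -
  have "linear (\<lambda>X. A ** (X::real^'k^'n) ** B)"
    by (rule linearI)
      (simp_all add: matrix_add_ldistrib matrix_add_rdistrib matrix_scaleR_left matrix_scaleR_right)
  then show ?thesis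
    by (simp add: linear_conv_bounded_linear)
qed

definition matpoly :: "nat \<Rightarrow> (nat \<Rightarrow> 'a::real_vector) \<Rightarrow> real \<Rightarrow> 'a" where
  "matpoly N c x = (\<Sum>k\<le>N. x^k *\<^sub>R c k)"

lemma matpoly_degree_le:
  assumes "\<And>k. k > n \<Longrightarrow> c k = 0" "n \<le> N"
  shows "matpoly N c x = matpoly n c x"
  unfolding matpoly_def using assms by (intro sum.mono_neutral_right) auto

lemma matpoly_nth: "matpoly N c x $ i $ j = (\<Sum>k\<le>N. c k $ i $ j * x^k)"
  by (simp add: matpoly_def sum_component mult.commute)

lemma matpoly_eq_0_imp_coeff_eq_0:
  fixes c :: "nat \<Rightarrow> real^'n^'m"
  assumes "\<And>x. matpoly N c x = 0" "k \<le> N"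
  shows "c k = 0"
proof -
  have "(\<Sum>k\<le>N. c k $ i $ j * x^k) = 0" for x i j
    using assms(1) by (simp flip: matpoly_nth)
  then have "c k $ i $ j = 0" for i j
    using polyfun_eq_0[of "\<lambda>k. c k $ i $ j" N] assms(2) by blast
  then show ?thesis
    by (simp add: vec_eq_iff)
qed

lemma scaleR_matpoly: "x *\<^sub>R matpoly N c x = matpoly (Suc N) (\<lambda>k. if k = 0 then 0 else c (k - 1)) x"
  unfolding matpoly_def by (subst sum.atMost_Suc_shift) (simp add: scaleR_sum_right)

lemma matrix_mult_matpoly: "(A::real^'n^'m) ** matpoly N c x = matpoly N (\<lambda>k. A ** c k) x"
  unfolding matpoly_def matrix_mult_sum_right by (simp add: matrix_scaleR_right)

lemma matpoly_diff: "matpoly N c x - matpoly N d x = matpoly N (\<lambda>k. c k - d k) x"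
  unfolding matpoly_def by (simp add: sum_subtractf scaleR_diff_right)

lemma sum_atMost_shift_vanishing:
  fixes F :: "nat \<Rightarrow> 'a::comm_monoid_add"
  assumes "\<And>i. i < d \<Longrightarrow> F i = 0" "\<And>i. n < i \<Longrightarrow> F i = 0"
  shows "(\<Sum>k\<le>n. F (k + d)) = (\<Sum>i\<le>n. F i)"
proof -
  have "(\<Sum>k\<le>n. F (k + d)) = (\<Sum>i\<in>{d..n+d}. F i)"
    using sum.shift_bounds_cl_nat_ivl[of F 0 d n] by (simp add: atMost_atLeast0)
  also have "\<dots> = (\<Sum>i\<le>n+d. F i)"
    by (rule sum.mono_neutral_left) (auto simp: assms(1))
  also have "\<dots> = (\<Sum>i\<le>n. F i)"
    by (rule sum.mono_neutral_right) (auto simp: assms(2))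
  finally show ?thesis .
qed

section \<open>The matrix inner product of \<open>W2\<close>\<close>

definition W2_moment :: "real \<Rightarrow> nat \<Rightarrow> real^2^2" where
  "W2_moment \<nu> k =
     mat2 (2*(\<nu>+1) * gegenbauer_moment \<nu> (k+2) + 2*\<nu> * gegenbauer_moment \<nu> k)
          ((2*\<nu>+1) * sqrt 2 * gegenbauer_moment \<nu> (k+1))
          ((2*\<nu>+1) * sqrt 2 * gegenbauer_moment \<nu> (k+1))
          (\<nu> * gegenbauer_moment \<nu> (k+2) + (\<nu>+1) * gegenbauer_moment \<nu> k)"

lemma transpose_W2_moment [simp]: "transpose (W2_moment \<nu> k) = W2_moment \<nu> k"
  unfolding matrix2_eq_iff W2_moment_def by simp

lemma W2_moment:
  assumes "\<nu> > -1/2"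
  shows "((\<lambda>x. x^k *\<^sub>R W2 \<nu> x) has_integral W2_moment \<nu> k) {-1..1}"
proof -
  let ?w = "gegenbauer_weight \<nu>"
  have "x^k *\<^sub>R W2 \<nu> x =
      (x^(k+2) * ?w x) *\<^sub>R mat2 (2*(\<nu>+1)) 0 0 \<nu>
      + (x^(k+1) * ?w x) *\<^sub>R mat2 0 ((2*\<nu>+1) * sqrt 2) ((2*\<nu>+1) * sqrt 2) 0
      + (x^k * ?w x) *\<^sub>R mat2 (2*\<nu>) 0 0 (\<nu>+1)" for x
    unfolding matrix2_eq_iff
    by (simp add: W2_def gegenbauer_weight_def algebra_simps power2_eq_square)
  moreover have "W2_moment \<nu> k =
      gegenbauer_moment \<nu> (k+2) *\<^sub>R mat2 (2*(\<nu>+1)) 0 0 \<nu>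
      + gegenbauer_moment \<nu> (k+1) *\<^sub>R mat2 0 ((2*\<nu>+1) * sqrt 2) ((2*\<nu>+1) * sqrt 2) 0
      + gegenbauer_moment \<nu> k *\<^sub>R mat2 (2*\<nu>) 0 0 (\<nu>+1)"
    unfolding matrix2_eq_iff by (simp add: W2_moment_def algebra_simps)
  ultimately show ?thesis
    using assms by (simp only:) (intro has_integral_add has_integral_scaleR_left gegenbauer_moment)
qed

text \<open>The matrix inner product \<open>\<integral> P W2 Q\<^sup>T\<close> of two matrix polynomials, in terms of their coefficients.\<close>
definition W2_pairing ::
    "real \<Rightarrow> nat \<Rightarrow> (nat \<Rightarrow> real^2^2) \<Rightarrow> nat \<Rightarrow> (nat \<Rightarrow> real^2^2) \<Rightarrow> real^2^2" where
  "W2_pairing \<nu> N c M d = (\<Sum>i\<le>N. \<Sum>j\<le>M. c i ** W2_moment \<nu> (i+j) ** transpose (d j))"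

lemma matpoly_W2_pairing:
  assumes "\<nu> > -1/2"
  shows "((\<lambda>x. matpoly N c x ** W2 \<nu> x ** transpose (matpoly M d x)) has_integral W2_pairing \<nu> N c M d)
           {-1..1}"
proof -
  have "matpoly N c x ** W2 \<nu> x ** transpose (matpoly M d x) =
      (\<Sum>i\<le>N. \<Sum>j\<le>M. c i ** (x^(i+j) *\<^sub>R W2 \<nu> x) ** transpose (d j))" for x
    unfolding matpoly_def matrix_mult_sum_left transpose_sum matrix_mult_sum_right
    by (simp add: matrix_scaleR_left matrix_scaleR_right transpose_scalar power_add)
      (subst sum.swap, simp add: mult.commute)
  then show ?thesis
    unfolding W2_pairing_def
    by (simp only:) (intro has_integral_sum finite_atMost
        has_integral_linear[OF W2_moment[OF assms] bounded_linear_matrix_sandwich, unfolded o_def])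
qed

lemma W2_congruence_diag:
  "((A::real^2^2) ** W2 \<nu> x ** transpose A) $ i $ i = gegenbauer_weight \<nu> x *
     ((\<nu>+1) * (sqrt 2 * x * A$i$1 + A$i$2)\<^sup>2 + \<nu> * (sqrt 2 * A$i$1 + x * A$i$2)\<^sup>2)"
  by (simp add: W2_def gegenbauer_weight_def algebra_simps power2_eq_square)

lemma W2_form_eq_0_imp:
  assumes "\<nu> > 0" "\<bar>x\<bar> < 1"
    and "(\<nu>+1) * (sqrt 2 * x * p + q)\<^sup>2 + \<nu> * (sqrt 2 * p + x * q)\<^sup>2 = 0"
  shows "p = 0 \<and> q = 0"
proof -
  have "(\<nu>+1) * (sqrt 2 * x * p + q)\<^sup>2 = 0" "\<nu> * (sqrt 2 * p + x * q)\<^sup>2 = 0"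
    using assms(1,3) zero_le_power2[of "sqrt 2 * x * p + q"] zero_le_power2[of "sqrt 2 * p + x * q"]
    by (smt (verit, best) mult_nonneg_nonneg)+
  then have q: "q = - (sqrt 2 * x * p)" and "sqrt 2 * p + x * q = 0"
    using assms(1) by (simp_all add: add_eq_0_iff2)
  then have "sqrt 2 * p * (1 - x\<^sup>2) = 0"
    by (simp add: algebra_simps power2_eq_square)
  moreover have "1 - x\<^sup>2 \<noteq> 0"
    using assms(2) by (simp flip: abs_square_less_1)
  ultimately show ?thesis
    using q by simp
qed

lemma has_integral_0_nonneg_subinterval:
  fixes h :: "real \<Rightarrow> real"
  assumes "(h has_integral 0) {a..b}" "\<And>x. x \<in> {a..b} \<Longrightarrow> h x \<ge> 0"
    and "{c..d} \<subseteq> {a..b}" "c < d" "continuous_on {c..d} h" "x \<in> {c..d}"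
  shows "h x = 0"
proof -
  have int: "h integrable_on {c..d}"
    using integrable_on_subinterval[OF has_integral_integrable[OF assms(1)] assms(3)] .
  have "integral {c..d} h \<le> integral {a..b} h"
    by (rule integral_subset_le) (use assms int has_integral_integrable in auto)
  moreover have "integral {c..d} h \<ge> 0"
    by (rule integral_nonneg[OF int]) (use assms(2,3) in auto)
  ultimately have "(h has_integral 0) (cbox c d)"
    using assms(1) int by (metis antisym integrable_integral integral_unique interval_cbox)
  then show ?thesis
    by (rule has_integral_0_cbox_imp_0[rotated 2]) (use assms in auto)
qed

lemma polyfun_vanishing_on_infinite_set:
  fixes c :: "nat \<Rightarrow> real"
  assumes "infinite S" "\<And>x. x \<in> S \<Longrightarrow> (\<Sum>i\<le>N. c i * x^i) = 0" "k \<le> N"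
  shows "c k = 0"
proof -
  have "S \<subseteq> {x. (\<Sum>i\<le>N. c i * x^i) = 0}"
    using assms(2) by auto
  then have "infinite {x. (\<Sum>i\<le>N. c i * x^i) = 0}"
    using assms(1) finite_subset by blast
  then show ?thesis
    using polyfun_finite_roots[of c N] assms(3) by blast
qed

lemma W2_pairing_self_diag_eq_0_imp:
  assumes "\<nu> > 0" "W2_pairing \<nu> N R N R $ i $ i = 0" "x \<in> {-1/2..1/2}"
  shows "matpoly N R x $ i $ 1 = 0 \<and> matpoly N R x $ i $ 2 = 0"
proof -
  define p where "p x = matpoly N R x $ i $ 1" for x
  define q where "q x = matpoly N R x $ i $ 2" for x
  define h where "h x = (matpoly N R x ** W2 \<nu> x ** transpose (matpoly N R x)) $ i $ i" for x
  have h_eq: "h x = gegenbauer_weight \<nu> x *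
      ((\<nu>+1) * (sqrt 2 * x * p x + q x)\<^sup>2 + \<nu> * (sqrt 2 * p x + x * q x)\<^sup>2)" for x
    unfolding h_def p_def q_def by (rule W2_congruence_diag)
  have "(h has_integral W2_pairing \<nu> N R N R $ i $ i) {-1..1}"
    unfolding h_def
    using has_integral_linear[OF matpoly_W2_pairing[of \<nu> N R N R]
        bounded_linear_compose[OF bounded_linear_vec_nth bounded_linear_vec_nth, of i i]] assms(1)
    by (simp add: o_def)
  then have int: "(h has_integral 0) {-1..1}"
    using assms(2) by simp
  have nonneg: "h x \<ge> 0" for x
    unfolding h_eq using assms(1)
    by (intro mult_nonneg_nonneg add_nonneg_nonneg gegenbauer_weight_nonneg) auto
  have cont: "continuous_on {-1/2..1/2} h"
    unfolding h_eq[abs_def] gegenbauer_weight_def p_def q_def matpoly_nth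
    by (intro continuous_intros continuous_on_powr') (auto simp: power2_eq_1_iff)
  have "p x = 0 \<and> q x = 0"
  proof (rule W2_form_eq_0_imp[OF assms(1)])
    show "\<bar>x\<bar> < 1"
      using assms(3) by auto
    moreover have "h x = 0"
      by (rule has_integral_0_nonneg_subinterval[OF int _ _ _ cont assms(3)]) (auto simp: nonneg)
    ultimately show "(\<nu>+1) * (sqrt 2 * x * p x + q x)\<^sup>2 + \<nu> * (sqrt 2 * p x + x * q x)\<^sup>2 = 0"
      using gegenbauer_weight_pos[of x \<nu>] unfolding h_eq by simp
  qed
  then show ?thesis
    by (simp add: p_def q_def)
qed

lemma W2_pairing_self_eq_0_imp:
  assumes "\<nu> > 0" "W2_pairing \<nu> N R N R = 0" "k \<le> N"
  shows "R k = 0"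
proof -
  have inf: "infinite {-1/2..1/2::real}"
    by (simp add: infinite_Icc)
  have "R k $ i $ j = 0" if "j = 1 \<or> j = 2" for i j
  proof (rule polyfun_vanishing_on_infinite_set[OF inf _ assms(3)])
    show "(\<Sum>l\<le>N. R l $ i $ j * x^l) = 0" if "x \<in> {-1/2..1/2}" for x
      using W2_pairing_self_diag_eq_0_imp[OF assms(1) _ that, of N R i] assms(2) \<open>j = 1 \<or> j = 2\<close>
      unfolding matpoly_nth by auto
  qed
  then show ?thesis
    unfolding matrix2_eq_iff by simp
qed

section \<open>A symmetric second-order operator for \<open>W2\<close>\<close>

text \<open>\<open>W2\<close> is an eigenweight of the operator
  \<open>P \<mapsto> (1 - x\<^sup>2) P'' + P' (W2_D1 - (2\<nu> + 3) x) + P W2_D0\<close>, acting on matrix polynomials from the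
  right. \<open>W2_operator \<nu> c k\<close> is the coefficient of \<open>x^k\<close> in its value on the polynomial with
  coefficients \<open>c\<close>, and \<open>W2_operator_moment \<nu> i j\<close> is the pairing of its value on \<open>x^i\<close>
  with \<open>x^j\<close>.\<close>
definition W2_D1 :: "real^2^2" where
  "W2_D1 = mat2 0 (2 * sqrt 2) (sqrt 2) 0"

definition W2_D0 :: "real^2^2" where
  "W2_D0 = mat2 0 0 0 1"

definition W2_eigenvalue :: "real \<Rightarrow> nat \<Rightarrow> real^2^2" where
  "W2_eigenvalue \<nu> k = W2_D0 - (real k * (real k + 2*\<nu> + 2)) *\<^sub>R mat 1"

definition W2_operator :: "real \<Rightarrow> (nat \<Rightarrow> real^2^2) \<Rightarrow> nat \<Rightarrow> real^2^2" where
  "W2_operator \<nu> c k = real ((k+2) * (k+1)) *\<^sub>R c (k+2) + real (k+1) *\<^sub>R (c (k+1) ** W2_D1)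
     + c k ** W2_eigenvalue \<nu> k"

definition W2_operator_moment :: "real \<Rightarrow> nat \<Rightarrow> nat \<Rightarrow> real^2^2" where
  "W2_operator_moment \<nu> i j = (real i * (real i - 1)) *\<^sub>R W2_moment \<nu> (i+j-2)
     + real i *\<^sub>R (W2_D1 ** W2_moment \<nu> (i+j-1)) + W2_eigenvalue \<nu> i ** W2_moment \<nu> (i+j)"

lemma transpose_W2_eigenvalue [simp]: "transpose (W2_eigenvalue \<nu> k) = W2_eigenvalue \<nu> k"
  unfolding matrix2_eq_iff W2_eigenvalue_def W2_D0_def by simp

text \<open>All moments of total degree \<open>t + 2\<close> are rational multiples of \<open>m t\<close> and \<open>m (t+1)\<close>,
  after which both sides are explicit.\<close>
lemma W2_operator_moment_symmetric_ge2:
  assumes "\<nu> > 0" and ij: "i + j = t + 2"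
  shows "W2_operator_moment \<nu> i j = transpose (W2_operator_moment \<nu> j i)"
proof -
  let ?m = "gegenbauer_moment \<nu>"
  define D2 where "D2 = real t + 2*\<nu> + 2"
  define D3 where "D3 = real t + 2*\<nu> + 3"
  define D4 where "D4 = real t + 2*\<nu> + 4"
  have D: "D2 \<noteq> 0" "D3 \<noteq> 0" "D4 \<noteq> 0"
    using assms(1) by (simp_all add: D2_def D3_def D4_def add_pos_nonneg)
  have "t + 1 + 2 = t + 3" "t + 2 + 2 = t + 4"
    by simp_all
  note rec = gegenbauer_moment_rec[of \<nu> t] gegenbauer_moment_rec[of \<nu> "t+1", unfolded this(1)]
    gegenbauer_moment_rec[of \<nu> "t+2", unfolded this(2)]
  have m2: "?m (t+2) = (real t + 1) * ?m t / D2"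
    using rec(1) assms(1) D by (simp add: D2_def field_simps)
  have m3: "?m (t+3) = (real t + 2) * ?m (t+1) / D3"
    using rec(2) assms(1) D by (simp add: D3_def field_simps)
  have m4: "?m (t+4) = (real t + 3) * ((real t + 1) * ?m t / D2) / D4"
    using rec(3) assms(1) D unfolding m2[symmetric] by (simp add: D4_def field_simps)
  have idx: "i + j - 2 = t" "i + j - 1 = t + 1" "j + i - 2 = t" "j + i - 1 = t + 1"
      "i + j = t + 2" "j + i = t + 2"
    using ij by auto
  have moments: "W2_moment \<nu> t = mat2 (2*(\<nu>+1) * ?m (t+2) + 2*\<nu> * ?m t) ((2*\<nu>+1) * sqrt 2 * ?m (t+1))
        ((2*\<nu>+1) * sqrt 2 * ?m (t+1)) (\<nu> * ?m (t+2) + (\<nu>+1) * ?m t)"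
      "W2_moment \<nu> (t+1) = mat2 (2*(\<nu>+1) * ?m (t+3) + 2*\<nu> * ?m (t+1)) ((2*\<nu>+1) * sqrt 2 * ?m (t+2))
        ((2*\<nu>+1) * sqrt 2 * ?m (t+2)) (\<nu> * ?m (t+3) + (\<nu>+1) * ?m (t+1))"
      "W2_moment \<nu> (t+2) = mat2 (2*(\<nu>+1) * ?m (t+4) + 2*\<nu> * ?m (t+2)) ((2*\<nu>+1) * sqrt 2 * ?m (t+3))
        ((2*\<nu>+1) * sqrt 2 * ?m (t+3)) (\<nu> * ?m (t+4) + (\<nu>+1) * ?m (t+2))"
    by (simp_all add: W2_moment_def numeral_eq_Suc)
  have j: "real j = real t + 2 - real i"
    using ij by (simp add: add.commute flip: of_nat_add)
  have sqrt_2_cancel: "sqrt 2 * (x * sqrt 2 * y) = 2 * (x * y)" for x y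
    by (simp add: mult.left_commute)
  show ?thesis
    unfolding W2_operator_moment_def W2_eigenvalue_def
    unfolding idx(1-4) unfolding idx(5,6) unfolding moments m2 m3 m4
    unfolding D2_def[symmetric] D3_def[symmetric] D4_def[symmetric]
    unfolding matrix2_eq_iff W2_D1_def W2_D0_def
    apply (simp add: j sqrt_2_cancel)
    apply (intro conjI)
    apply (simp_all add: field_simps D)
    apply (simp_all add: D2_def D3_def D4_def algebra_simps)
    done
qed

lemma W2_operator_moment_symmetric:
  assumes "\<nu> > 0"
  shows "W2_operator_moment \<nu> i j = transpose (W2_operator_moment \<nu> j i)"
proof (cases "i + j \<ge> 2")
  case True
  then obtain t where "i + j = t + 2"
    by (metis add.commute le_iff_add)
  then show ?thesis
    using W2_operator_moment_symmetric_ge2[OF assms] by blast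
next
  case False
  have m1: "gegenbauer_moment \<nu> 1 = 0" and m3: "gegenbauer_moment \<nu> 3 = 0"
    using gegenbauer_moment_odd[of \<nu> 0] gegenbauer_moment_odd[of \<nu> 1] assms by (simp_all add: numeral_eq_Suc)
  have m0: "gegenbauer_moment \<nu> 0 = (2*\<nu> + 2) * gegenbauer_moment \<nu> 2"
    using gegenbauer_moment_rec[of \<nu> 0] assms by (simp add: numeral_2_eq_2)
  have sym10: "W2_operator_moment \<nu> 1 0 = transpose (W2_operator_moment \<nu> 0 1)"
    unfolding W2_operator_moment_def W2_eigenvalue_def matrix2_eq_iff W2_D1_def W2_D0_def W2_moment_def
    using m1 m3 m0 by (simp add: numeral_2_eq_2 numeral_3_eq_3 algebra_simps)
  from False consider "i = 0" "j = 0" | "i = 1" "j = 0" | "i = 0" "j = 1"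
    by linarith
  then show ?thesis
  proof cases
    case 1
    then show ?thesis
      unfolding W2_operator_moment_def W2_eigenvalue_def W2_D0_def matrix2_eq_iff W2_moment_def
      using m1 by simp
  next
    case 2
    then show ?thesis
      using sym10 by simp
  next
    case 3
    then show ?thesis
      using arg_cong[OF sym10, of transpose] by simp
  qed
qed

text \<open>The pairing \<open>\<integral> P W2 x^j\<close> of a matrix polynomial with a monomial.\<close>
definition W2_moment_pairing :: "real \<Rightarrow> nat \<Rightarrow> (nat \<Rightarrow> real^2^2) \<Rightarrow> nat \<Rightarrow> real^2^2" where
  "W2_moment_pairing \<nu> N c j = (\<Sum>i\<le>N. c i ** W2_moment \<nu> (i+j))"

lemma W2_pairing_eq_sum_moment_pairing:
  "W2_pairing \<nu> N c M d = (\<Sum>j\<le>M. W2_moment_pairing \<nu> N c j ** transpose (d j))"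
  unfolding W2_pairing_def W2_moment_pairing_def matrix_mult_sum_left by (subst sum.swap) simp

lemma W2_moment_pairing_operator:
  assumes "\<And>k. k > n \<Longrightarrow> c k = 0"
  shows "W2_moment_pairing \<nu> n (W2_operator \<nu> c) j = (\<Sum>i\<le>n. c i ** W2_operator_moment \<nu> i j)"
proof -
  define F2 where "F2 i = (real i * (real i - 1)) *\<^sub>R (c i ** W2_moment \<nu> (i+j-2))" for i
  define F1 where "F1 i = real i *\<^sub>R (c i ** W2_D1 ** W2_moment \<nu> (i+j-1))" for i
  define F0 where "F0 i = c i ** W2_eigenvalue \<nu> i ** W2_moment \<nu> (i+j)" for i
  have "W2_operator \<nu> c k ** W2_moment \<nu> (k+j) = F2 (k+2) + F1 (k+1) + F0 k" for k
    unfolding W2_operator_def F2_def F1_def F0_def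
    by (simp add: matrix_add_rdistrib matrix_scaleR_left algebra_simps)
  then have "W2_moment_pairing \<nu> n (W2_operator \<nu> c) j
      = (\<Sum>k\<le>n. F2 (k+2)) + (\<Sum>k\<le>n. F1 (k+1)) + (\<Sum>k\<le>n. F0 k)"
    by (simp add: W2_moment_pairing_def sum.distrib)
  also have "(\<Sum>k\<le>n. F2 (k+2)) = (\<Sum>k\<le>n. F2 k)"
    by (rule sum_atMost_shift_vanishing) (auto simp: F2_def assms less_2_cases_iff)
  also have "(\<Sum>k\<le>n. F1 (k+1)) = (\<Sum>k\<le>n. F1 k)"
    by (rule sum_atMost_shift_vanishing) (auto simp: F1_def assms)
  also have "(\<Sum>k\<le>n. F2 k) + (\<Sum>k\<le>n. F1 k) + (\<Sum>k\<le>n. F0 k)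
      = (\<Sum>i\<le>n. c i ** W2_operator_moment \<nu> i j)"
    unfolding sum.distrib[symmetric] W2_operator_moment_def F2_def F1_def F0_def
    by (simp add: matrix_add_ldistrib matrix_scaleR_right matrix_mul_assoc)
  finally show ?thesis .
qed

text \<open>The right-hand side is the pairing of \<open>P\<close> with the operator applied to \<open>x^j\<close>.\<close>
lemma W2_moment_pairing_operator_symmetric:
  assumes "\<nu> > 0" "\<And>k. k > n \<Longrightarrow> c k = 0"
  defines "S \<equiv> W2_moment_pairing \<nu> n c"
  shows "W2_moment_pairing \<nu> n (W2_operator \<nu> c) j =
    (real j * (real j - 1)) *\<^sub>R S (j-2) + real j *\<^sub>R (S (j-1) ** transpose W2_D1)
    + S j ** W2_eigenvalue \<nu> j"
proof -
  have "c i ** transpose (W2_operator_moment \<nu> j i) =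
      (real j * (real j - 1)) *\<^sub>R (c i ** W2_moment \<nu> (i+(j-2)))
      + real j *\<^sub>R (c i ** W2_moment \<nu> (i+(j-1)) ** transpose W2_D1)
      + c i ** W2_moment \<nu> (i+j) ** W2_eigenvalue \<nu> j" for i
  proof -
    consider "j = 0" | "j = 1" | t where "j = t + 2"
      by (metis One_nat_def add_2_eq_Suc' not0_implies_Suc)
    then show ?thesis
      unfolding W2_operator_moment_def transpose_add transpose_scalar matrix_transpose_mul
      by cases (simp_all add: matrix_add_ldistrib matrix_scaleR_right matrix_scaleR_left
          matrix_mul_assoc add.commute add.left_commute)
  qed
  then have "(\<Sum>i\<le>n. c i ** transpose (W2_operator_moment \<nu> j i)) =
    (real j * (real j - 1)) *\<^sub>R S (j-2) + real j *\<^sub>R (S (j-1) ** transpose W2_D1)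
    + S j ** W2_eigenvalue \<nu> j"
    by (simp add: S_def W2_moment_pairing_def sum.distrib matrix_mult_sum_left scaleR_sum_right)
  then show ?thesis
    by (simp only: W2_moment_pairing_operator[OF assms(2)] W2_operator_moment_symmetric[OF assms(1), of _ j])
qed

section \<open>The monic orthogonal polynomials are eigenfunctions\<close>

definition monic_coeff :: "nat \<Rightarrow> (real \<Rightarrow> real^2^2) \<Rightarrow> nat \<Rightarrow> real^2^2" where
  "monic_coeff n p k = (if k = n then mat 1 else if k < n then
      (SOME A. \<forall>x. p x = x^n *\<^sub>R mat 1 + (\<Sum>k<n. x^k *\<^sub>R A k)) k else 0)"

lemma monic_coeff_top [simp]: "monic_coeff n p n = mat 1"
  by (simp add: monic_coeff_def)

lemma monic_coeff_above [simp]: "k > n \<Longrightarrow> monic_coeff n p k = 0"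
  by (simp add: monic_coeff_def)

lemma monic_matpoly_eq_matpoly:
  assumes "monic_matpoly n p" "n \<le> N"
  shows "p x = matpoly N (monic_coeff n p) x"
proof -
  define A where "A = (SOME A. \<forall>x. p x = x^n *\<^sub>R mat 1 + (\<Sum>k<n. x^k *\<^sub>R A k))"
  have "\<forall>x. p x = x^n *\<^sub>R mat 1 + (\<Sum>k<n. x^k *\<^sub>R A k)"
    using assms(1) unfolding monic_matpoly_def A_def by (rule someI_ex)
  then have "p x = matpoly n (monic_coeff n p) x"
    unfolding matpoly_def monic_coeff_def A_def[symmetric]
    by (simp add: lessThan_Suc_atMost[symmetric] add.commute)
  also have "\<dots> = matpoly N (monic_coeff n p) x"
    using assms(2) by (intro matpoly_degree_le[symmetric]) auto
  finally show ?thesis .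
qed

lemma diagonal_sylvester_2:
  fixes A X :: "real^2^2"
  assumes "A + X ** mat2 a1 0 0 a2 = mat2 b1 0 0 b2 ** X"
    and "b1 \<noteq> a1" "b1 \<noteq> a2" "b2 \<noteq> a1" "b2 \<noteq> a2"
  shows "X = mat2 (A$1$1 / (b1 - a1)) (A$1$2 / (b1 - a2)) (A$2$1 / (b2 - a1)) (A$2$2 / (b2 - a2))"
  using assms by (simp add: matrix2_eq_iff field_simps)

lemma diagonal_sylvester_2_unique:
  fixes A X Y :: "real^2^2"
  assumes "A + X ** Da = Db ** X" "A + Y ** Da = Db ** Y"
    and "Da = mat2 a1 0 0 a2" "Db = mat2 b1 0 0 b2"
    and "b1 \<noteq> a1" "b1 \<noteq> a2" "b2 \<noteq> a1" "b2 \<noteq> a2"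
  shows "X = Y"
  using diagonal_sylvester_2[OF assms(1)[unfolded assms(3,4)] assms(5-)]
    diagonal_sylvester_2[OF assms(2)[unfolded assms(3,4)] assms(5-)] by simp

lemma W2_eigenvalue_diagonal:
  "W2_eigenvalue \<nu> k = mat2 (- (real k * (real k + 2*\<nu> + 2))) 0 0 (1 - real k * (real k + 2*\<nu> + 2))"
  by (simp add: matrix2_eq_iff W2_eigenvalue_def W2_D0_def)

text \<open>The coefficients of \<open>x^(n-1)\<close> and \<open>x^(n-2)\<close> in \<open>P\<^sub>n\<close>, as functions of \<open>r = n\<close>.\<close>
definition W2_subleading :: "real \<Rightarrow> real \<Rightarrow> real^2^2" where
  "W2_subleading \<nu> r = mat2 0 (- sqrt 2 * r / (r + \<nu> + 1)) (- sqrt 2 * r / (2 * (r + \<nu>))) 0"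

definition W2_subsubleading :: "real \<Rightarrow> real \<Rightarrow> real^2^2" where
  "W2_subsubleading \<nu> r = mat2 (- r * (r - 1) * (r + \<nu> - 1) / (4 * (r + \<nu>) * (r + \<nu> + 1))) 0 0
                          (- r * (r - 1) * (r + \<nu> - 2) / (4 * (r + \<nu>)\<^sup>2))"

lemma W2_subsubleading_sylvester:
  fixes r \<nu> :: real
  assumes "\<nu> > 0" "r \<ge> 0"
  shows "(r * (r - 1)) *\<^sub>R mat 1 + (r - 1) *\<^sub>R (W2_subleading \<nu> r ** W2_D1)
      + W2_subsubleading \<nu> r ** mat2 (- ((r - 2) * (r + 2*\<nu>))) 0 0 (1 - (r - 2) * (r + 2*\<nu>))
    = mat2 (- (r * (r + 2*\<nu> + 2))) 0 0 (1 - r * (r + 2*\<nu> + 2)) ** W2_subsubleading \<nu> r"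
proof -
  define s0 where "s0 = r + \<nu>"
  define s1 where "s1 = r + \<nu> + 1"
  have "s0 \<noteq> 0" "s1 \<noteq> 0"
    using assms by (simp_all add: s0_def s1_def)
  then show ?thesis
    unfolding matrix2_eq_iff W2_D1_def W2_subleading_def W2_subsubleading_def power2_eq_square
    unfolding s1_def[symmetric] unfolding s0_def[symmetric]
    by (simp add: field_simps) (simp add: s0_def s1_def algebra_simps)
qed

context
  fixes \<nu> :: real and P :: "nat \<Rightarrow> real \<Rightarrow> real^2^2"
  assumes MOPS: "monic_MOPS (W2 \<nu>) P"
begin

lemma monic_matpoly_MOPS: "monic_matpoly n (P n)"
  using MOPS by (simp add: monic_MOPS_def)

lemma MOPS_pairing_eq_0:
  assumes "\<nu> > -1/2" "n \<noteq> m"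
  shows "W2_pairing \<nu> n (monic_coeff n (P n)) m (monic_coeff m (P m)) = 0"
proof -
  have "((\<lambda>x. P n x ** W2 \<nu> x ** transpose (P m x)) has_integral 0) {-1..1}"
    using MOPS assms(2) by (simp add: monic_MOPS_def)
  moreover have "((\<lambda>x. P n x ** W2 \<nu> x ** transpose (P m x)) has_integral W2_pairing \<nu> n (monic_coeff n (P n)) m (monic_coeff m (P m)))
      {-1..1}"
    using matpoly_W2_pairing[OF assms(1)]
    by (simp only: monic_matpoly_eq_matpoly[OF monic_matpoly_MOPS order_refl])
  ultimately show ?thesis
    using has_integral_unique by blast
qed

lemma MOPS_moment_pairing_eq_0:
  assumes "\<nu> > -1/2" "j < n"
  shows "W2_moment_pairing \<nu> n (monic_coeff n (P n)) j = 0"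
  using assms(2)
proof (induction j rule: less_induct)
  case (less j)
  have "0 = W2_pairing \<nu> n (monic_coeff n (P n)) j (monic_coeff j (P j))"
    using MOPS_pairing_eq_0[OF assms(1)] less.prems by simp
  also have "\<dots> = (\<Sum>k\<in>insert j {..<j}. W2_moment_pairing \<nu> n (monic_coeff n (P n)) k ** transpose (monic_coeff j (P j) k))"
    unfolding W2_pairing_eq_sum_moment_pairing by (intro sum.cong) auto
  also have "\<dots> = W2_moment_pairing \<nu> n (monic_coeff n (P n)) j"
    using less.IH less.prems by simp
  finally show ?case
    by simp
qed

text \<open>The defect \<open>R = D(P\<^sub>n) - \<Lambda>\<^sub>n P\<^sub>n\<close> has degree \<open>< n\<close> (the leading terms cancel), and by the
  symmetry of \<open>D\<close> it is orthogonal to all \<open>x^j\<close> with \<open>j < n\<close>; so \<open>\<langle>R, R\<rangle> = 0\<close>.\<close>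
lemma MOPS_eigen_equation:
  assumes "\<nu> > 0"
  shows "W2_operator \<nu> (monic_coeff n (P n)) k = W2_eigenvalue \<nu> n ** monic_coeff n (P n) k"
proof -
  define R where "R k = W2_operator \<nu> (monic_coeff n (P n)) k - W2_eigenvalue \<nu> n ** monic_coeff n (P n) k" for k
  have R_above: "R k = 0" if "k \<ge> n" for k
    using that by (cases "k = n") (simp_all add: R_def W2_operator_def)
  have orth: "W2_moment_pairing \<nu> n R j = 0" if "j < n" for j
  proof -
    define S where "S = W2_moment_pairing \<nu> n (monic_coeff n (P n))"
    have S0: "S l = 0" if "l \<le> j" for l
      unfolding S_def using MOPS_moment_pairing_eq_0 assms \<open>j < n\<close> that by simp
    have "W2_moment_pairing \<nu> n R j
        = W2_moment_pairing \<nu> n (W2_operator \<nu> (monic_coeff n (P n))) j - W2_eigenvalue \<nu> n ** S j"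
      by (simp add: R_def S_def W2_moment_pairing_def matrix_diff_rdistrib matrix_mul_assoc
          sum_subtractf matrix_mult_sum_right)
    also have "\<dots> = (real j * (real j - 1)) *\<^sub>R S (j-2) + real j *\<^sub>R (S (j-1) ** transpose W2_D1)
        + S j ** W2_eigenvalue \<nu> j - W2_eigenvalue \<nu> n ** S j"
      unfolding S_def by (simp only: W2_moment_pairing_operator_symmetric[OF assms monic_coeff_above])
    also have "\<dots> = 0"
      using S0 by (cases "j \<ge> 2"; cases "j \<ge> 1") auto
    finally show ?thesis .
  qed
  have "W2_moment_pairing \<nu> n R j ** transpose (R j) = 0" if "j \<le> n" for j
    using that orth R_above by (cases "j < n") auto
  then have "W2_pairing \<nu> n R n R = 0"
    unfolding W2_pairing_eq_sum_moment_pairing by (intro sum.neutral) simp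
  then have "R k = 0"
    using W2_pairing_self_eq_0_imp[OF assms, of n R k] R_above[of k] by (cases "k \<le> n") auto
  then show ?thesis
    by (simp add: R_def)
qed

lemma MOPS_subleading_coeff:
  assumes pos: "\<nu> > 0"
  shows "monic_coeff (Suc p) (P (Suc p)) p = W2_subleading \<nu> (real (Suc p))"
proof (rule diagonal_sylvester_2_unique[OF _ _ W2_eigenvalue_diagonal W2_eigenvalue_diagonal])
  show "real (Suc p) *\<^sub>R W2_D1 + monic_coeff (Suc p) (P (Suc p)) p ** W2_eigenvalue \<nu> p
      = W2_eigenvalue \<nu> (Suc p) ** monic_coeff (Suc p) (P (Suc p)) p"
    using MOPS_eigen_equation[OF pos, of "Suc p" p] by (simp add: W2_operator_def)
  show "real (Suc p) *\<^sub>R W2_D1 + W2_subleading \<nu> (real (Suc p)) ** W2_eigenvalue \<nu> p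
      = W2_eigenvalue \<nu> (Suc p) ** W2_subleading \<nu> (real (Suc p))"
    using pos by (simp add: matrix2_eq_iff W2_D1_def W2_eigenvalue_def W2_D0_def W2_subleading_def field_simps)
qed (use pos in \<open>simp_all add: algebra_simps\<close>)

lemma MOPS_subsubleading_coeff:
  assumes pos: "\<nu> > 0"
  shows "monic_coeff (Suc (Suc p)) (P (Suc (Suc p))) p = W2_subsubleading \<nu> (real (Suc (Suc p)))"
proof -
  let ?r = "real (Suc (Suc p))"
  let ?A = "(?r * (?r - 1)) *\<^sub>R mat 1 + (?r - 1) *\<^sub>R (W2_subleading \<nu> ?r ** W2_D1)"
  have "real ((p+2) * (p+1)) = ?r * (?r - 1)" "real (p+1) = ?r - 1"
    by (simp_all add: algebra_simps)
  then have coeff: "?A + monic_coeff (Suc (Suc p)) (P (Suc (Suc p))) p ** W2_eigenvalue \<nu> p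
      = W2_eigenvalue \<nu> (Suc (Suc p)) ** monic_coeff (Suc (Suc p)) (P (Suc (Suc p))) p"
    using MOPS_eigen_equation[OF pos, of "Suc (Suc p)" p] MOPS_subleading_coeff[OF pos, of "Suc p"]
    by (simp add: W2_operator_def)
  have eigenvalues:
    "W2_eigenvalue \<nu> p = mat2 (- ((?r - 2) * (?r + 2*\<nu>))) 0 0 (1 - (?r - 2) * (?r + 2*\<nu>))"
    "W2_eigenvalue \<nu> (Suc (Suc p)) = mat2 (- (?r * (?r + 2*\<nu> + 2))) 0 0 (1 - ?r * (?r + 2*\<nu> + 2))"
    by (simp_all add: W2_eigenvalue_diagonal algebra_simps)
  have closed_form: "?A + W2_subsubleading \<nu> ?r ** W2_eigenvalue \<nu> p
      = W2_eigenvalue \<nu> (Suc (Suc p)) ** W2_subsubleading \<nu> ?r"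
    unfolding eigenvalues by (rule W2_subsubleading_sylvester[OF pos]) simp
  show ?thesis
    by (rule diagonal_sylvester_2_unique[OF coeff closed_form eigenvalues])
      (use pos in \<open>simp_all add: algebra_simps\<close>)
qed

end

section \<open>The recurrence coefficients\<close>

lemma monic_recurrence_coeffs:
  fixes P :: "nat \<Rightarrow> real \<Rightarrow> real^2^2" and B C :: "real^2^2"
  assumes monic: "\<And>m. monic_matpoly m (P m)"
    and rec: "\<And>x. x *\<^sub>R P (Suc n) x = P (Suc (Suc n)) x + B ** P (Suc n) x + C ** P n x"
  shows "B = monic_coeff (Suc n) (P (Suc n)) n - monic_coeff (Suc (Suc n)) (P (Suc (Suc n))) (Suc n)"
    and "n \<ge> 1 \<Longrightarrow> C = monic_coeff (Suc n) (P (Suc n)) (n - 1)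
      - monic_coeff (Suc (Suc n)) (P (Suc (Suc n))) n - B ** monic_coeff (Suc n) (P (Suc n)) n"
proof -
  let ?c = "\<lambda>m. monic_coeff m (P m)"
  define N where "N = Suc (Suc n)"
  define f where "f k = (if k = 0 then 0 else ?c (Suc n) (k - 1)) - ?c (Suc (Suc n)) k
     - B ** ?c (Suc n) k - C ** ?c n k" for k
  have "matpoly N f x = 0" for x
  proof -
    have "matpoly N f x = x *\<^sub>R matpoly (Suc n) (?c (Suc n)) x - matpoly N (?c (Suc (Suc n))) x
        - B ** matpoly N (?c (Suc n)) x - C ** matpoly N (?c n) x"
      unfolding scaleR_matpoly matrix_mult_matpoly matpoly_diff f_def N_def ..
    also have "\<dots> = x *\<^sub>R P (Suc n) x - P (Suc (Suc n)) x - B ** P (Suc n) x - C ** P n x"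
    proof -
      have "matpoly (Suc n) (?c (Suc n)) x = P (Suc n) x" "matpoly N (?c (Suc (Suc n))) x = P (Suc (Suc n)) x"
        "matpoly N (?c (Suc n)) x = P (Suc n) x" "matpoly N (?c n) x = P n x"
        by (rule monic_matpoly_eq_matpoly[OF monic, symmetric]; simp add: N_def)+
      then show ?thesis
        by (simp only:)
    qed
    also have "\<dots> = 0"
      by (simp add: rec)
    finally show ?thesis .
  qed
  then have f0: "f k = 0" if "k \<le> N" for k
    using matpoly_eq_0_imp_coeff_eq_0 that by blast
  show "B = ?c (Suc n) n - ?c (Suc (Suc n)) (Suc n)"
    using f0[of "Suc n"] by (simp add: f_def N_def)
  assume "n \<ge> 1"
  then show "C = ?c (Suc n) (n - 1) - ?c (Suc (Suc n)) n - B ** ?c (Suc n) n"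
    using f0[of n] by (simp add: f_def N_def algebra_simps)
qed

section \<open>Asymptotics of the closed forms\<close>

lemma norm_matrix2_le: "norm (A::real^2^2) \<le> \<bar>A$1$1\<bar> + \<bar>A$1$2\<bar> + \<bar>A$2$1\<bar> + \<bar>A$2$2\<bar>"
proof -
  have "norm A \<le> (\<Sum>i\<in>UNIV. norm (A$i))"
    unfolding norm_vec_def by (rule L2_set_le_sum) simp
  also have "\<dots> = norm (A$1) + norm (A$2)"
    by (simp add: sum_2)
  also have "norm (A$1) \<le> \<bar>A$1$1\<bar> + \<bar>A$1$2\<bar>"
    using norm_le_l1_cart[of "A$1"] by (simp add: sum_2)
  also have "norm (A$2) \<le> \<bar>A$2$1\<bar> + \<bar>A$2$2\<bar>"
    using norm_le_l1_cart[of "A$2"] by (simp add: sum_2)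
  finally show ?thesis
    by simp
qed

lemma abs_divide_le_divide_power:
  fixes N D M k r :: real
  assumes "\<bar>N\<bar> \<le> M * r^a" "k * r^(a+b) \<le> D" "k > 0" "r > 0"
  shows "\<bar>N / D\<bar> \<le> M / (k * r^b)"
proof -
  have "k * r^(a+b) > 0"
    using assms(3,4) by simp
  then have D: "D > 0"
    using assms(2) by linarith
  have "M * r^a \<ge> 0"
    using assms(1) abs_ge_zero order_trans by blast
  then have M: "M \<ge> 0"
    using assms(4) by (metis less_le_not_le zero_le_mult_iff zero_less_power)
  have "\<bar>N / D\<bar> = \<bar>N\<bar> / D"
    using D by simp
  also have "\<dots> \<le> (M * r^a) / (k * r^(a+b))"
    by (rule frac_le) (use assms M D in auto)
  also have "\<dots> = M / (k * r^b)"
    using assms(3,4) by (simp add: power_add field_simps)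
  finally show ?thesis .
qed

lemma square_le_mult_shifted: "r > 0 \<Longrightarrow> a \<ge> 0 \<Longrightarrow> b \<ge> 0 \<Longrightarrow> r * r \<le> (r + a) * (r + (b::real))"
  by (intro mult_mono) auto

lemma abs_mult_linear_le:
  fixes r :: real
  assumes "r \<ge> 1" "a \<ge> 0" "b \<ge> 0"
  shows "\<bar>c * (a * r + b)\<bar> \<le> (\<bar>c\<bar> * (a + b)) * r^1"
proof -
  have "a * r + b \<le> (a + b) * r"
    using assms mult_left_mono[of 1 r b] by (simp add: algebra_simps)
  then show ?thesis
    using assms by (simp add: abs_mult mult_left_mono mult.assoc)
qed

lemma abs_quadratic_le:
  fixes r :: real
  assumes "r \<ge> 1" "a \<ge> 0" "b \<ge> 0" "c \<ge> 0"
  shows "\<bar>- (a * r * r + b * r + c)\<bar> \<le> (a + b + c) * r^2"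
proof -
  have "b * r \<le> b * (r * r)" "c \<le> c * (r * r)"
    using assms mult_left_mono[of r "r * r" b] mult_left_mono[of 1 "r * r" c] mult_mono[of 1 r 1 r]
    by auto
  moreover have "0 \<le> a * r * r + b * r + c"
    using assms by simp
  ultimately show ?thesis
    by (simp add: power2_eq_square algebra_simps)
qed

lemma W2_subleading_diff_eq:
  assumes "\<nu> > 0" "r > 0"
  shows "W2_subleading \<nu> r - W2_subleading \<nu> (r+1) - (1 / r\<^sup>2) *\<^sub>R mat2 0 (sqrt 2 * (1 + \<nu>)) (\<nu> / sqrt 2) 0 =
    mat2 0 (- sqrt 2 * (\<nu>+1) * ((2*\<nu>+3) * r + (\<nu>+1)*(\<nu>+2)) / (r\<^sup>2 * (r+\<nu>+1) * (r+\<nu>+2)))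
      (- sqrt 2 * \<nu> * ((2*\<nu>+1) * r + \<nu>*(\<nu>+1)) / (2 * r\<^sup>2 * (r+\<nu>) * (r+\<nu>+1))) 0"
proof -
  define s0 where "s0 = r + \<nu>"
  define s1 where "s1 = r + \<nu> + 1"
  define s2 where "s2 = r + \<nu> + 2"
  have nonzero: "s0 \<noteq> 0" "s1 \<noteq> 0" "s2 \<noteq> 0" "r \<noteq> 0"
    using assms by (simp_all add: s0_def s1_def s2_def)
  have X: "W2_subleading \<nu> r = mat2 0 (- sqrt 2 * r / s1) (- sqrt 2 * r / (2 * s0)) 0"
    "W2_subleading \<nu> (r+1) = mat2 0 (- sqrt 2 * (r+1) / s2) (- sqrt 2 * (r+1) / (2 * s1)) 0"
    by (simp_all add: W2_subleading_def s0_def s1_def s2_def matrix2_eq_iff algebra_simps)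
  have sqrt2: "\<nu> / sqrt 2 = sqrt 2 * \<nu> / 2"
    by (simp add: field_simps)
  show ?thesis
    unfolding matrix2_eq_iff X sqrt2
    unfolding s2_def[symmetric] unfolding s1_def[symmetric] unfolding s0_def[symmetric]
    using nonzero by (simp add: field_simps power2_eq_square) (simp add: s0_def s1_def s2_def algebra_simps)
qed

lemma sqrt_2_mult_divide: "sqrt 2 * a / b * (- sqrt 2 * c / d) = - (2 * (a * c) / (b * d))"
proof -
  have "sqrt 2 * a / b * (- sqrt 2 * c / d) = - ((sqrt 2 * sqrt 2) * (a * c) / (b * d))"
    by (simp only: times_divide_times_eq mult_minus_left mult_minus_right minus_divide_left)
      (simp only: ac_simps)
  then show ?thesis
    by simp
qed

lemma W2_subleading_diff_mult:
  assumes "\<nu> > 0" "r > 0"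
  shows "(W2_subleading \<nu> r - W2_subleading \<nu> (r+1)) ** W2_subleading \<nu> r
      = mat2 (- (\<nu>+1) * r / ((r+\<nu>) * (r+\<nu>+1) * (r+\<nu>+2))) 0 0 (- \<nu> * r / ((r+\<nu>) * (r+\<nu>+1) * (r+\<nu>+1)))"
proof -
  define s0 where "s0 = r + \<nu>"
  define s1 where "s1 = r + \<nu> + 1"
  define s2 where "s2 = r + \<nu> + 2"
  have nonzero: "s0 \<noteq> 0" "s1 \<noteq> 0" "s2 \<noteq> 0"
    using assms by (simp_all add: s0_def s1_def s2_def)
  have X: "W2_subleading \<nu> r = mat2 0 (- sqrt 2 * r / s1) (- sqrt 2 * r / (2 * s0)) 0"
    "W2_subleading \<nu> (r+1) = mat2 0 (- sqrt 2 * (r+1) / s2) (- sqrt 2 * (r+1) / (2 * s1)) 0"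
    by (simp_all add: W2_subleading_def s0_def s1_def s2_def matrix2_eq_iff algebra_simps)
  have "- sqrt 2 * r / s1 - - sqrt 2 * (r+1) / s2 = sqrt 2 * (\<nu>+1) / (s1 * s2)"
    "- sqrt 2 * r / (2 * s0) - - sqrt 2 * (r+1) / (2 * s1) = sqrt 2 * \<nu> / (2 * s0 * s1)"
    using nonzero by (simp_all add: field_simps) (simp_all add: s0_def s1_def s2_def algebra_simps)
  then have diff: "W2_subleading \<nu> r - W2_subleading \<nu> (r+1)
      = mat2 0 (sqrt 2 * (\<nu>+1) / (s1 * s2)) (sqrt 2 * \<nu> / (2 * s0 * s1)) 0"
    unfolding X matrix2_eq_iff by simp
  show ?thesis
    unfolding diff unfolding X(1) matrix2_eq_iff matrix2_mult_nth mat2_nth sqrt_2_mult_divide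
    unfolding s2_def[symmetric] unfolding s1_def[symmetric] unfolding s0_def[symmetric]
    using nonzero by (simp add: field_simps)
qed

lemma W2_subsubleading_diff_eq:
  assumes "\<nu> > 0" "r > 0"
  shows "W2_subsubleading \<nu> r - W2_subsubleading \<nu> (r+1) - (W2_subleading \<nu> r - W2_subleading \<nu> (r+1)) ** W2_subleading \<nu> r
      - (1/4) *\<^sub>R mat 1 =
    mat2 (- \<nu> * (\<nu>+1) / (4 * (r+\<nu>) * (r+\<nu>+1))) 0 0
      (- ((\<nu>*\<nu>+\<nu>+2) * r * r + (2*\<nu>*\<nu>*\<nu> + 3*\<nu>*\<nu> + 5*\<nu> + 2) * r + \<nu>*\<nu>*(\<nu>+1)*(\<nu>+1))
        / (4 * (r+\<nu>) * (r+\<nu>) * (r+\<nu>+1) * (r+\<nu>+1)))"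
    (is "?C = _")
proof -
  define s0 where "s0 = r + \<nu>"
  define s1 where "s1 = r + \<nu> + 1"
  define s2 where "s2 = r + \<nu> + 2"
  have nonzero: "s0 \<noteq> 0" "s1 \<noteq> 0" "s2 \<noteq> 0" "r \<noteq> 0"
    using assms by (simp_all add: s0_def s1_def s2_def)
  have Y: "W2_subsubleading \<nu> r = mat2 (- r * (r - 1) * (r + \<nu> - 1) / (4 * s0 * s1)) 0 0
      (- r * (r - 1) * (r + \<nu> - 2) / (4 * s0 * s0))"
    "W2_subsubleading \<nu> (r+1) = mat2 (- (r+1) * r * (r + \<nu>) / (4 * s1 * s2)) 0 0
      (- (r+1) * r * (r + \<nu> - 1) / (4 * s1 * s1))"
    by (simp_all add: W2_subsubleading_def s0_def s1_def s2_def matrix2_eq_iff algebra_simps power2_eq_square)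
  have XX: "(W2_subleading \<nu> r - W2_subleading \<nu> (r+1)) ** W2_subleading \<nu> r
      = mat2 (- (\<nu>+1) * r / (s0 * s1 * s2)) 0 0 (- \<nu> * r / (s0 * s1 * s1))"
    using W2_subleading_diff_mult[OF assms] by (simp add: s0_def s1_def s2_def)
  have "?C $ 1 $ 1 = - r*(r-1)*(r+\<nu>-1) / (4 * s0 * s1) + (r+1) * r * (r+\<nu>) / (4 * s1 * s2)
      + (\<nu>+1) * r / (s0 * s1 * s2) - 1/4"
    unfolding XX Y using nonzero by (simp add: field_simps)
  also have "\<dots> = - \<nu> * (\<nu>+1) / (4 * s0 * s1)"
  proof -
    have "A / (4 * s0 * s1) + B / (4 * s1 * s2) + C / (s0 * s1 * s2) - 1/4 = T / (4 * s0 * s1)"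
      if "A * s2 + B * s0 + 4 * C - s0 * s1 * s2 = T * s2" for A B C T
      using nonzero that by (simp add: field_simps)
    then show ?thesis
      by this (simp add: s0_def s1_def s2_def algebra_simps)
  qed
  finally have C11: "?C $ 1 $ 1 = - \<nu> * (\<nu>+1) / (4 * (r+\<nu>) * (r+\<nu>+1))"
    by (simp add: s0_def s1_def)
  have "?C $ 2 $ 2 = - r*(r-1)*(r+\<nu>-2) / (4 * s0 * s0) + (r+1) * r * (r+\<nu>-1) / (4 * s1 * s1)
      + \<nu> * r / (s0 * s1 * s1) - 1/4"
    unfolding XX Y using nonzero by (simp add: field_simps)
  also have "\<dots> = - ((\<nu>*\<nu>+\<nu>+2) * r * r + (2*\<nu>*\<nu>*\<nu> + 3*\<nu>*\<nu> + 5*\<nu> + 2) * r + \<nu>*\<nu>*(\<nu>+1)*(\<nu>+1))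
      / (4 * s0 * s0 * s1 * s1)"
  proof -
    have "A / (4 * s0 * s0) + B / (4 * s1 * s1) + C / (s0 * s1 * s1) - 1/4 = T / (4 * s0 * s0 * s1 * s1)"
      if "A * (s1 * s1) + B * (s0 * s0) + 4 * C * s0 - (s0 * s0) * (s1 * s1) = T" for A B C T
      using nonzero that by (simp add: field_simps)
    then show ?thesis
      by this (simp add: s0_def s1_def algebra_simps)
  qed
  finally have C22: "?C $ 2 $ 2 = - ((\<nu>*\<nu>+\<nu>+2) * r * r + (2*\<nu>*\<nu>*\<nu> + 3*\<nu>*\<nu> + 5*\<nu> + 2) * r
      + \<nu>*\<nu>*(\<nu>+1)*(\<nu>+1)) / (4 * (r+\<nu>) * (r+\<nu>) * (r+\<nu>+1) * (r+\<nu>+1))"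
    by (simp add: s0_def s1_def)
  show ?thesis
    unfolding matrix2_eq_iff using C11 C22 by (simp add: XX Y)
qed

lemma W2_subleading_diff_asymptotics:
  assumes "\<nu> > 0"
  shows "\<exists>K. \<forall>r\<ge>1. norm (W2_subleading \<nu> r - W2_subleading \<nu> (r+1)
      - (1 / r\<^sup>2) *\<^sub>R mat2 0 (sqrt 2 * (1 + \<nu>)) (\<nu> / sqrt 2) 0) \<le> K / r^3"
proof (intro exI allI impI)
  fix r :: real
  assume r: "r \<ge> 1"
  define K1 where "K1 = sqrt 2 * (\<nu>+1) * ((2*\<nu>+3) + (\<nu>+1)*(\<nu>+2))"
  define K2 where "K2 = sqrt 2 * \<nu> * ((2*\<nu>+1) + \<nu>*(\<nu>+1))"
  have "r^(1+3) = r * r * r * r"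
    by (simp add: power4_eq_xxxx)
  moreover have "r * r * r * r \<le> r\<^sup>2 * (r+\<nu>+1) * (r+\<nu>+2)" "r * r * r * r \<le> r\<^sup>2 * (r+\<nu>) * (r+\<nu>+1)"
    using square_le_mult_shifted[of r "\<nu>+1" "\<nu>+2"] square_le_mult_shifted[of r \<nu> "\<nu>+1"] r assms
      mult_left_mono[where c="r\<^sup>2"]
    by (simp_all add: power2_eq_square mult.assoc add.assoc)
  ultimately have denominators: "1 * r^(1+3) \<le> r\<^sup>2 * (r+\<nu>+1) * (r+\<nu>+2)"
      "2 * r^(1+3) \<le> 2 * r\<^sup>2 * (r+\<nu>) * (r+\<nu>+1)"
    by simp_all
  have "\<bar>- sqrt 2 * (\<nu>+1) * ((2*\<nu>+3) * r + (\<nu>+1)*(\<nu>+2)) / (r\<^sup>2 * (r+\<nu>+1) * (r+\<nu>+2))\<bar>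
      \<le> K1 / (1 * r^3)"
    using abs_mult_linear_le[of r "2*\<nu>+3" "(\<nu>+1)*(\<nu>+2)" "- sqrt 2 * (\<nu>+1)"] r assms
    by (intro abs_divide_le_divide_power[OF _ denominators(1)]) (simp_all add: K1_def abs_mult)
  moreover have "\<bar>- sqrt 2 * \<nu> * ((2*\<nu>+1) * r + \<nu>*(\<nu>+1)) / (2 * r\<^sup>2 * (r+\<nu>) * (r+\<nu>+1))\<bar>
      \<le> K2 / (2 * r^3)"
    using abs_mult_linear_le[of r "2*\<nu>+1" "\<nu>*(\<nu>+1)" "- sqrt 2 * \<nu>"] r assms
    by (intro abs_divide_le_divide_power[OF _ denominators(2)]) (simp_all add: K2_def abs_mult)
  ultimately show "norm (W2_subleading \<nu> r - W2_subleading \<nu> (r+1)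
      - (1 / r\<^sup>2) *\<^sub>R mat2 0 (sqrt 2 * (1 + \<nu>)) (\<nu> / sqrt 2) 0) \<le> (K1 + K2 / 2) / r^3"
    using norm_matrix2_le[of "W2_subleading \<nu> r - W2_subleading \<nu> (r+1)
      - (1 / r\<^sup>2) *\<^sub>R mat2 0 (sqrt 2 * (1 + \<nu>)) (\<nu> / sqrt 2) 0"] r assms
    by (simp add: W2_subleading_diff_eq add_divide_distrib)
qed

lemma W2_subsubleading_diff_asymptotics:
  assumes "\<nu> > 0"
  shows "\<exists>K. \<forall>r\<ge>1. norm (W2_subsubleading \<nu> r - W2_subsubleading \<nu> (r+1)
      - (W2_subleading \<nu> r - W2_subleading \<nu> (r+1)) ** W2_subleading \<nu> r - (1/4) *\<^sub>R mat 1) \<le> K / r\<^sup>2"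
proof (intro exI allI impI)
  fix r :: real
  assume r: "r \<ge> 1"
  define K1 where "K1 = \<nu> * (\<nu>+1)"
  define K2 where "K2 = (\<nu>*\<nu>+\<nu>+2) + (2*\<nu>*\<nu>*\<nu> + 3*\<nu>*\<nu> + 5*\<nu> + 2) + \<nu>*\<nu>*(\<nu>+1)*(\<nu>+1)"
  have sq: "r * r \<le> (r+\<nu>) * (r+\<nu>+1)"
    using square_le_mult_shifted[of r \<nu> "\<nu>+1"] r assms by (simp add: add.assoc)
  then have sq2: "(r * r) * (r * r) \<le> ((r+\<nu>) * (r+\<nu>+1)) * ((r+\<nu>) * (r+\<nu>+1))"
    using r assms by (intro mult_mono) auto
  have "4 * r^(0+2) = 4 * (r * r)" "4 * r^(2+2) = 4 * ((r * r) * (r * r))"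
    by (simp_all add: power2_eq_square power4_eq_xxxx mult.assoc)
  moreover have "4 * (r+\<nu>) * (r+\<nu>+1) = 4 * ((r+\<nu>) * (r+\<nu>+1))"
      "4 * (r+\<nu>) * (r+\<nu>) * (r+\<nu>+1) * (r+\<nu>+1) = 4 * (((r+\<nu>) * (r+\<nu>+1)) * ((r+\<nu>) * (r+\<nu>+1)))"
    by (simp_all only: ac_simps)
  ultimately have denominators: "4 * r^(0+2) \<le> 4 * (r+\<nu>) * (r+\<nu>+1)"
      "4 * r^(2+2) \<le> 4 * (r+\<nu>) * (r+\<nu>) * (r+\<nu>+1) * (r+\<nu>+1)"
    using mult_left_mono[OF sq zero_le_numeral] mult_left_mono[OF sq2 zero_le_numeral] by (simp_all only:)
  have "\<bar>- \<nu> * (\<nu>+1) / (4 * (r+\<nu>) * (r+\<nu>+1))\<bar> \<le> K1 / (4 * r^2)"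
    using r assms by (intro abs_divide_le_divide_power[OF _ denominators(1)]) (simp_all add: K1_def)
  moreover have "\<bar>- ((\<nu>*\<nu>+\<nu>+2) * r * r + (2*\<nu>*\<nu>*\<nu> + 3*\<nu>*\<nu> + 5*\<nu> + 2) * r + \<nu>*\<nu>*(\<nu>+1)*(\<nu>+1))
      / (4 * (r+\<nu>) * (r+\<nu>) * (r+\<nu>+1) * (r+\<nu>+1))\<bar> \<le> K2 / (4 * r^2)"
    using r assms unfolding K2_def
    by (intro abs_divide_le_divide_power[OF _ denominators(2)] abs_quadratic_le) simp_all
  ultimately show "norm (W2_subsubleading \<nu> r - W2_subsubleading \<nu> (r+1)
      - (W2_subleading \<nu> r - W2_subleading \<nu> (r+1)) ** W2_subleading \<nu> r - (1/4) *\<^sub>R mat 1)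
      \<le> (K1 / 4 + K2 / 4) / r\<^sup>2"
    using norm_matrix2_le[of "W2_subsubleading \<nu> r - W2_subsubleading \<nu> (r+1)
      - (W2_subleading \<nu> r - W2_subleading \<nu> (r+1)) ** W2_subleading \<nu> r - (1/4) *\<^sub>R mat 1"] r assms
    by (simp add: W2_subsubleading_diff_eq add_divide_distrib)
qed

context
  fixes \<nu> :: real and P :: "nat \<Rightarrow> real \<Rightarrow> real^2^2" and B C :: "nat \<Rightarrow> real^2^2"
  assumes MOPS: "monic_MOPS (W2 \<nu>) P" and pos: "\<nu> > 0"
    and rec: "\<forall>n x. x *\<^sub>R P (Suc n) x = P (Suc (Suc n)) x + B (Suc n) ** P (Suc n) x + C (Suc n) ** P n x"
begin

lemma MOPS_recurrence_B: "B (Suc n) = W2_subleading \<nu> (real (Suc n)) - W2_subleading \<nu> (real (Suc n) + 1)"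
  using monic_recurrence_coeffs(1)[OF monic_matpoly_MOPS[OF MOPS], of n "B (Suc n)" "C (Suc n)"] rec
    MOPS_subleading_coeff[OF MOPS pos, of n] MOPS_subleading_coeff[OF MOPS pos, of "Suc n"]
  by (simp add: add.commute)

lemma MOPS_recurrence_C:
  "C (Suc (Suc n)) = W2_subsubleading \<nu> (real (Suc (Suc n))) - W2_subsubleading \<nu> (real (Suc (Suc n)) + 1)
     - (W2_subleading \<nu> (real (Suc (Suc n))) - W2_subleading \<nu> (real (Suc (Suc n)) + 1))
       ** W2_subleading \<nu> (real (Suc (Suc n)))"
  using monic_recurrence_coeffs(2)[OF monic_matpoly_MOPS[OF MOPS], of "Suc n" "B (Suc (Suc n))" "C (Suc (Suc n))"] rec
    MOPS_subsubleading_coeff[OF MOPS pos, of n] MOPS_subsubleading_coeff[OF MOPS pos, of "Suc n"]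
    MOPS_subleading_coeff[OF MOPS pos, of "Suc n"] MOPS_recurrence_B[of "Suc n"]
  by (simp add: add.commute)

lemma MOPS_recurrence_B_asymptotics:
  "\<exists>K. \<forall>n\<ge>1. norm (B n - (1 / (real n)\<^sup>2) *\<^sub>R mat2 0 (sqrt 2 * (1 + \<nu>)) (\<nu> / sqrt 2) 0)
    \<le> K / (real n) ^ 3"
proof -
  obtain K where K: "\<And>r. r \<ge> 1 \<Longrightarrow> norm (W2_subleading \<nu> r - W2_subleading \<nu> (r+1)
      - (1 / r\<^sup>2) *\<^sub>R mat2 0 (sqrt 2 * (1 + \<nu>)) (\<nu> / sqrt 2) 0) \<le> K / r^3"
    using W2_subleading_diff_asymptotics[OF pos] by blast
  have "norm (B (Suc m) - (1 / (real (Suc m))\<^sup>2) *\<^sub>R mat2 0 (sqrt 2 * (1 + \<nu>)) (\<nu> / sqrt 2) 0)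
      \<le> K / (real (Suc m)) ^ 3" for m
    using MOPS_recurrence_B[of m] K[of "real (Suc m)"] by simp
  then show ?thesis
    by (metis not_one_le_zero not0_implies_Suc)
qed

lemma MOPS_recurrence_C_asymptotics:
  "\<exists>K. \<forall>n\<ge>2. norm (C n - (1/4) *\<^sub>R mat 1) \<le> K / (real n)\<^sup>2"
proof -
  obtain K where K: "\<And>r. r \<ge> 1 \<Longrightarrow> norm (W2_subsubleading \<nu> r - W2_subsubleading \<nu> (r+1)
      - (W2_subleading \<nu> r - W2_subleading \<nu> (r+1)) ** W2_subleading \<nu> r - (1/4) *\<^sub>R mat 1) \<le> K / r\<^sup>2"
    using W2_subsubleading_diff_asymptotics[OF pos] by blast
  have "norm (C (Suc (Suc m)) - (1/4) *\<^sub>R mat 1) \<le> K / (real (Suc (Suc m)))\<^sup>2" for m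
    using MOPS_recurrence_C[of m] K[of "real (Suc (Suc m))"] by simp
  then show ?thesis
    by (metis add_2_eq_Suc le_Suc_ex)
qed

end

theorem corollary2p9:
  fixes \<nu> :: real
    and P :: "nat \<Rightarrow> real \<Rightarrow> real^2^2"
    and B C :: "nat \<Rightarrow> real^2^2"
  assumes "\<nu> > 0"
    and "monic_MOPS (W2 \<nu>) P"
    and "\<forall>x. x *\<^sub>R P 0 x = P 1 x + B 0 ** P 0 x"
    and "\<forall>n x. x *\<^sub>R P (Suc n) x = P (Suc (Suc n)) x + B (Suc n) ** P (Suc n) x + C (Suc n) ** P n x"
  shows "(\<exists>K. \<forall>\<^sub>F n in sequentially.
           norm (B n - (1 / (real n)\<^sup>2) *\<^sub>R mat2 0 (sqrt 2 * (1 + \<nu>)) (\<nu> / sqrt 2) 0)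
             \<le> K / (real n) ^ 3) \<and>
         (\<exists>K. \<forall>\<^sub>F n in sequentially.
           norm (C n - (1/4) *\<^sub>R mat 1) \<le> K / (real n)\<^sup>2)"
  using MOPS_recurrence_B_asymptotics[OF assms(2,1,4)] MOPS_recurrence_C_asymptotics[OF assms(2,1,4)]
  by (meson eventually_sequentiallyI)

end
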